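(* Let $C,A^1,\dots,A^m\in\mathbb{S}^n$, $b\in\mathbb{R}^m$, with $\mathbf{P}$ and $\mathbf{D}$ feasible and $\mathbf{D}$ of singularity degree one, and let $0\le r<n$ be such that, writing $L(y)=C-\sum_iA^iy_i$ in blocks $L_{11}(y)\in\mathbb{S}^r$, $L_{12}(y)\in\mathbb{R}^{r\times(n-r)}$, $L_{22}(y)\in\mathbb{S}^{n-r}$: (a) for every $y$, $L(y)\succeq0$ iff $L_{12}(y)=0$, $L_{22}(y)=0$, $L_{11}(y)\succeq0$; (b) some $y$ has $L_{12}(y)=0$, $L_{22}(y)=0$, $L_{11}(y)\succ0$; (c) there is $X=\mathrm{diag}(0,X_{22})$ with $X_{22}\succ0$, $C\bullet X=0$, $A^i\bullet X=0$ for all $i$. Let $M>0$ be a constant such that for all $t\ge0$ and $y$, $L_{22}(y)+tI_{22}\succeq0$ implies $tMI_{22}\succeq L_{22}(y)+tI_{22}$, and set $K:=M(v(\mathbf{P})-v(\mathbf{D})+2)$. For $\alpha>0$, $t>0$ let $u_2(\alpha,t)$ be the optimal value (supremum) of $$\mathbf{RD2}(\alpha,t):\ \max_y\ b^Ty\ \text{ s.t. } L(y)+t\alpha I\succeq0,\ \ \|L_{12}(y)\|_F^2\le K\alpha .$$ Then for every $\alpha>0$, the limit $\bar u(\alpha):=\lim_{t\downarrow0}u_2(\alpha,t)$ exists and is finite.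
   Context: $\mathbf{P}$: $\min_X C\bullet X$ s.t. $A^i\bullet X=b_i$, $X\succeq0$; $\mathbf{D}$: $\max_y b^Ty$ s.t. $C-\sum_iA^iy_i\succeq0$; $v(\mathbf{P}),v(\mathbf{D})$ are their (finite) optimal values. $\mathbf{D}$ has singularity degree one if it is feasible and there exists a nonzero $X\succeq0$ with $C\bullet X=0$, $A^i\bullet X=0$ for all $i$, such that some $y$ has $C-\sum_iA^iy_i$ in the relative interior of $\{Z\succeq0: Z\bullet X=0\}$. $\|\cdot\|_F$ is the Frobenius norm; $I_{22}$ is the $(n-r)\times(n-r)$ identity. *)

theory Defs
  imports "HOL-Analysis.Analysis"
begin

text \<open>Square real matrices indexed by a finite linearly ordered type 'n (so n = CARD('n)).
  Constraint index i ranges over i < m; y and b are functions nat => real, only i < m used.\<close>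

definition symm :: "real^'n^'n \<Rightarrow> bool" where
  "symm X \<longleftrightarrow> transpose X = X"

definition psd :: "real^'n^'n \<Rightarrow> bool" where
  "psd X \<longleftrightarrow> symm X \<and> (\<forall>x. 0 \<le> x \<bullet> (X *v x))"

definition frob :: "real^'n^'n \<Rightarrow> real^'n^'n \<Rightarrow> real" where
  "frob A B = (\<Sum>i\<in>UNIV. \<Sum>j\<in>UNIV. A$i$j * B$i$j)"

definition psd_block :: "'n set \<Rightarrow> real^'n^'n \<Rightarrow> bool" where
  "psd_block S X \<longleftrightarrow> (\<forall>i\<in>S. \<forall>j\<in>S. X$i$j = X$j$i) \<and>
     (\<forall>x. (\<forall>i. i \<notin> S \<longrightarrow> x$i = 0) \<longrightarrow> 0 \<le> x \<bullet> (X *v x))"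

definition pd_block :: "'n set \<Rightarrow> real^'n^'n \<Rightarrow> bool" where
  "pd_block S X \<longleftrightarrow> (\<forall>i\<in>S. \<forall>j\<in>S. X$i$j = X$j$i) \<and>
     (\<forall>x. (\<forall>i. i \<notin> S \<longrightarrow> x$i = 0) \<longrightarrow> x \<noteq> 0 \<longrightarrow> 0 < x \<bullet> (X *v x))"

text \<open>The first r indices (w.r.t. the linear order of 'n): block 1 of size r.\<close>
definition first_idx :: "nat \<Rightarrow> ('n::{finite,linorder}) set" where
  "first_idx r = {i. card {j. j < i} < r}"

definition Lmap :: "real^'n^'n \<Rightarrow> (nat \<Rightarrow> real^'n^'n) \<Rightarrow> nat \<Rightarrow> (nat \<Rightarrow> real) \<Rightarrow> real^'n^'n" where
  "Lmap C A m y = C - (\<Sum>i<m. y i *\<^sub>R A i)"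

definition primal_feasible :: "real^'n^'n \<Rightarrow> (nat \<Rightarrow> real^'n^'n) \<Rightarrow> nat \<Rightarrow> (nat \<Rightarrow> real) \<Rightarrow> real^'n^'n \<Rightarrow> bool" where
  "primal_feasible C A m b X \<longleftrightarrow> psd X \<and> (\<forall>i<m. frob (A i) X = b i)"

definition dual_feasible :: "real^'n^'n \<Rightarrow> (nat \<Rightarrow> real^'n^'n) \<Rightarrow> nat \<Rightarrow> (nat \<Rightarrow> real) \<Rightarrow> bool" where
  "dual_feasible C A m y \<longleftrightarrow> psd (Lmap C A m y)"

definition vP :: "real^'n^'n \<Rightarrow> (nat \<Rightarrow> real^'n^'n) \<Rightarrow> nat \<Rightarrow> (nat \<Rightarrow> real) \<Rightarrow> ereal" where
  "vP C A m b = (INF X\<in>{X. primal_feasible C A m b X}. ereal (frob C X))"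

definition vD :: "real^'n^'n \<Rightarrow> (nat \<Rightarrow> real^'n^'n) \<Rightarrow> nat \<Rightarrow> (nat \<Rightarrow> real) \<Rightarrow> ereal" where
  "vD C A m b = (SUP y\<in>{y. dual_feasible C A m y}. ereal (\<Sum>i<m. b i * y i))"

definition sing_deg_one :: "real^'n^'n \<Rightarrow> (nat \<Rightarrow> real^'n^'n) \<Rightarrow> nat \<Rightarrow> bool" where
  "sing_deg_one C A m \<longleftrightarrow> (\<exists>y. dual_feasible C A m y) \<and>
     (\<exists>X. X \<noteq> 0 \<and> psd X \<and> frob C X = 0 \<and> (\<forall>i<m. frob (A i) X = 0) \<and>
        (\<exists>y. Lmap C A m y \<in> rel_interior {Z. psd Z \<and> frob Z X = 0}))"

definition offblock_sq :: "'n set \<Rightarrow> real^'n^'n \<Rightarrow> real" where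
  "offblock_sq S X = (\<Sum>i\<in>S. \<Sum>j\<in>-S. (X$i$j)^2)"

definition u2 :: "real^'n^'n \<Rightarrow> (nat \<Rightarrow> real^'n^'n) \<Rightarrow> nat \<Rightarrow> (nat \<Rightarrow> real) \<Rightarrow> 'n set \<Rightarrow> real \<Rightarrow> real \<Rightarrow> real \<Rightarrow> ereal" where
  "u2 C A m b S K \<alpha> t = (SUP y\<in>{y. psd (Lmap C A m y + (t * \<alpha>) *\<^sub>R mat 1) \<and>
        offblock_sq S (Lmap C A m y) \<le> K * \<alpha>}. ereal (\<Sum>i<m. b i * y i))"

end

theory Submission
  imports Defs
begin

text \<open>For fixed \<open>\<alpha> > 0\<close> the feasible set of RD2(\<open>\<alpha>\<close>, t) grows with t, so
  \<open>u\<^sub>2(\<alpha>, t)\<close> is nondecreasing in t and its limit as \<open>t \<down> 0\<close> is its infimum over t > 0.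
  That infimum is finite: every dual feasible \<open>y\<^sub>0\<close> is feasible for all RD2(\<open>\<alpha>\<close>, t), because
  condition (a) forces \<open>L\<^sub>1\<^sub>2(y\<^sub>0) = 0\<close> and weak duality gives \<open>K \<ge> 0\<close>; and weak duality
  against a primal feasible \<open>X\<^sub>0\<close>, based on the self-duality of the semidefinite cone, bounds
  \<open>u\<^sub>2(\<alpha>, t)\<close> above by \<open>C \<bullet> X\<^sub>0 + t\<alpha> tr X\<^sub>0\<close>.\<close>

lemma symm_entry: "symm X \<Longrightarrow> X $ j $ i = X $ i $ j"
  unfolding symm_def by (metis transpose_def vec_lambda_beta)

lemma scaleR_matrix_vector_mult: "(c *\<^sub>R A) *v x = c *\<^sub>R (A *v (x::real^'n))"
  by (simp add: vec_eq_iff matrix_vector_mult_def sum_distrib_left algebra_simps)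

lemma quad_form_axis: "axis p 1 \<bullet> ((X::real^'n^'n) *v axis p 1) = X $ p $ p"
  by (simp add: matrix_vector_mult_basis column_def inner_axis')

lemma quad_form_add_axis:
  fixes X :: "real^'n^'n"
  assumes "symm X"
  shows "(x + s *\<^sub>R axis p 1) \<bullet> (X *v (x + s *\<^sub>R axis p 1)) =
    x \<bullet> (X *v x) + 2 * s * (X *v x) $ p + s\<^sup>2 * X $ p $ p"
proof -
  have "x \<bullet> (X *v axis p 1) = (X *v x) $ p"
    using symm_entry[OF assms]
    by (simp add: matrix_vector_mult_basis column_def inner_vec_def)
      (simp add: matrix_vector_mult_def mult.commute)
  moreover have "(X *v axis p 1) $ p = X $ p $ p"
    by (simp add: matrix_vector_mult_basis column_def)
  ultimately show ?thesis
    by (simp add: inner_axis' matrix_vector_right_distrib matrix_vector_mult_scaleR inner_add_left inner_add_right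
        algebra_simps power2_eq_square)
qed

lemma psd_diag_nonneg: "psd X \<Longrightarrow> 0 \<le> X $ p $ p"
  using quad_form_axis[of p X] unfolding psd_def by metis

lemma psd_zero_diag_row:
  fixes X :: "real^'n^'n"
  assumes psd: "psd X" and zero: "X $ p $ p = 0"
  shows "X $ p $ j = 0"
proof (rule ccontr)
  assume ne: "X $ p $ j \<noteq> 0"
  define s where "s = - (X $ j $ j + 1) / (2 * X $ p $ j)"
  have "0 \<le> (axis j 1 + s *\<^sub>R axis p 1) \<bullet> (X *v (axis j 1 + s *\<^sub>R axis p 1))"
    using psd unfolding psd_def by blast
  also have "\<dots> = X $ j $ j + 2 * s * X $ p $ j"
    using psd zero unfolding psd_def
    by (simp add: quad_form_add_axis quad_form_axis matrix_vector_mult_basis column_def inner_axis')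
  also have "\<dots> = -1"
    using ne by (simp add: s_def field_simps)
  finally show False by simp
qed

lemma psd_sub_rank_one:
  fixes X :: "real^'n^'n"
  assumes psd: "psd X" and pos: "X $ p $ p > 0"
  shows "psd (X - (1 / X $ p $ p) *\<^sub>R (\<chi> i j. X $ p $ i * X $ p $ j))"
    (is "psd (X - (1 / ?c) *\<^sub>R ?Q)")
proof -
  have symX: "symm X" using psd unfolding psd_def ..
  have "symm (X - (1 / ?c) *\<^sub>R ?Q)"
    using symm_entry[OF symX] unfolding symm_def by (simp add: vec_eq_iff transpose_def mult.commute)
  moreover have "0 \<le> x \<bullet> ((X - (1 / ?c) *\<^sub>R ?Q) *v x)" for x
  proof -
    have row: "(X *v x) $ p = X $ p \<bullet> x"
      by (simp add: matrix_vector_mult_def inner_vec_def)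
    have "x \<bullet> (?Q *v x) = (X $ p \<bullet> x)\<^sup>2"
      by (simp add: matrix_vector_mult_def inner_vec_def power2_eq_square sum_product
          sum_distrib_left algebra_simps)
    define s where "s = - (X *v x) $ p / ?c"
    \<comment> \<open>completing the square in the direction of the p-th basis vector\<close>
    have "x \<bullet> ((X - (1 / ?c) *\<^sub>R ?Q) *v x) = x \<bullet> (X *v x) + 2 * s * (X *v x) $ p + s\<^sup>2 * ?c"
      using pos \<open>x \<bullet> (?Q *v x) = _\<close> row
      by (simp add: s_def matrix_vector_mult_diff_rdistrib scaleR_matrix_vector_mult inner_diff_right
          field_simps power2_eq_square)
    also have "\<dots> = (x + s *\<^sub>R axis p 1) \<bullet> (X *v (x + s *\<^sub>R axis p 1))"
      using quad_form_add_axis[OF symX] by simp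
    also have "0 \<le> \<dots>" using psd unfolding psd_def by blast
    finally show ?thesis .
  qed
  ultimately show ?thesis unfolding psd_def by blast
qed

lemma frob_psd_nonneg_supported:
  fixes Z X :: "real^'n^'n"
  assumes Z: "psd Z" and "finite S"
  shows "psd X \<Longrightarrow> \<forall>i j. i \<notin> S \<longrightarrow> X $ i $ j = 0 \<Longrightarrow> 0 \<le> frob Z X"
  using \<open>finite S\<close>
proof (induction S arbitrary: X rule: finite_induct)
  case empty
  then show ?case by (simp add: frob_def)
next
  case (insert p S)
  show ?case
  proof (cases "X $ p $ p = 0")
    case True
    then have "X $ p $ j = 0" for j
      using psd_zero_diag_row[OF insert.prems(1)] by simp
    then have "\<forall>i j. i \<notin> S \<longrightarrow> X $ i $ j = 0"
      using insert.prems(2) by (metis insert_iff)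
    then show ?thesis using insert.IH insert.prems(1) by blast
  next
    case False
    \<comment> \<open>subtracting this rank-one psd matrix keeps X psd and clears row p\<close>
    define c where "c = X $ p $ p"
    define Q :: "real^'n^'n" where "Q = (\<chi> i j. X $ p $ i * X $ p $ j)"
    define X' where "X' = X - (1 / c) *\<^sub>R Q"
    have c: "c > 0" using False psd_diag_nonneg[OF insert.prems(1), of p] unfolding c_def by linarith
    have "psd X'" unfolding X'_def Q_def c_def using insert.prems(1) c[unfolded c_def]
      by (rule psd_sub_rank_one)
    moreover have "\<forall>i j. i \<notin> S \<longrightarrow> X' $ i $ j = 0"
    proof (intro allI impI)
      fix i j assume "i \<notin> S"
      have "X $ p $ i = 0" if "i \<noteq> p"
        using insert.prems \<open>i \<notin> S\<close> that symm_entry[of X p i] unfolding psd_def by simp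
      then show "X' $ i $ j = 0"
        using insert.prems(2) \<open>i \<notin> S\<close> c by (cases "i = p") (simp_all add: X'_def Q_def c_def)
    qed
    ultimately have "0 \<le> frob Z X'" using insert.IH by blast
    moreover have "0 \<le> frob Z Q"
    proof -
      have "frob Z Q = X $ p \<bullet> (Z *v X $ p)"
        by (simp add: frob_def Q_def matrix_vector_mult_def inner_vec_def sum_distrib_left mult_ac)
      then show ?thesis using Z unfolding psd_def by simp
    qed
    moreover have "frob Z X = frob Z X' + (1 / c) * frob Z Q"
      by (simp add: frob_def X'_def sum_distrib_left field_simps flip: sum.distrib)
    ultimately show ?thesis using c by simp
  qed
qed

lemma frob_psd_nonneg: "psd Z \<Longrightarrow> psd X \<Longrightarrow> 0 \<le> frob Z X"
  using frob_psd_nonneg_supported[of Z UNIV X] by simp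

lemma frob_sum_left: "frob (sum f S) X = (\<Sum>k\<in>S. frob (f k) X)"
  by (simp add: frob_def sum_component sum_distrib_right sum.swap[of _ S])

lemma frob_add_left: "frob (A + B) X = frob A X + frob B X"
  by (simp add: frob_def sum.distrib algebra_simps)

lemma frob_diff_left: "frob (A - B) X = frob A X - frob B X"
  by (simp add: frob_def sum_subtractf algebra_simps)

lemma frob_scaleR_left: "frob (c *\<^sub>R A) X = c * frob A X"
  by (simp add: frob_def sum_distrib_left algebra_simps)

lemma dual_objective_eq:
  assumes "primal_feasible C A m b X"
  shows "(\<Sum>i<m. b i * y i) = frob C X - frob (Lmap C A m y) X"
  using assms unfolding primal_feasible_def Lmap_def
  by (simp add: frob_diff_left frob_sum_left frob_scaleR_left mult.commute)

lemma weak_duality: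
  assumes "primal_feasible C A m b X" and "dual_feasible C A m y"
  shows "(\<Sum>i<m. b i * y i) \<le> frob C X"
  using assms frob_psd_nonneg[of "Lmap C A m y" X] dual_objective_eq[OF assms(1)]
  unfolding primal_feasible_def dual_feasible_def by simp

lemma vD_le_vP: "vD C A m b \<le> vP C A m b"
  unfolding vD_def vP_def
  by (intro SUP_least INF_greatest) (simp add: weak_duality)

lemma psd_add_scaled_id:
  assumes "psd Z" and "0 \<le> s"
  shows "psd (Z + s *\<^sub>R mat 1)"
proof -
  have "symm (Z + s *\<^sub>R mat 1)"
    using assms(1) unfolding psd_def symm_def by (simp add: vec_eq_iff transpose_def mat_def)
  moreover have "x \<bullet> ((Z + s *\<^sub>R mat 1) *v x) = x \<bullet> (Z *v x) + s * (x \<bullet> x)" for x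
    by (simp add: matrix_vector_mult_add_rdistrib scaleR_matrix_vector_mult inner_add_right)
  ultimately show ?thesis using assms unfolding psd_def by simp
qed

lemma psd_add_scaled_id_mono:
  assumes "psd (Z + s *\<^sub>R mat 1)" and "s \<le> s'"
  shows "psd (Z + s' *\<^sub>R mat 1)"
proof -
  have "Z + s' *\<^sub>R mat 1 = (Z + s *\<^sub>R mat 1) + (s' - s) *\<^sub>R mat 1"
    by (simp add: algebra_simps)
  then show ?thesis using psd_add_scaled_id[OF assms(1), of "s' - s"] assms(2) by (metis diff_ge_0_iff_ge)
qed

lemma u2_mono:
  assumes "0 \<le> \<alpha>" and "t \<le> t'"
  shows "u2 C A m b S K \<alpha> t \<le> u2 C A m b S K \<alpha> t'"
  unfolding u2_def
  using assms psd_add_scaled_id_mono[of "Lmap C A m _" "t * \<alpha>" "t' * \<alpha>"]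
  by (intro SUP_subset_mono) (auto intro: mult_right_mono)

lemma u2_lower_bound:
  assumes "dual_feasible C A m y" and "offblock_sq S (Lmap C A m y) \<le> K * \<alpha>" and "0 \<le> t * \<alpha>"
  shows "ereal (\<Sum>i<m. b i * y i) \<le> u2 C A m b S K \<alpha> t"
  unfolding u2_def
  using assms psd_add_scaled_id[of "Lmap C A m y" "t * \<alpha>"] unfolding dual_feasible_def
  by (intro SUP_upper) simp

lemma u2_upper_bound:
  assumes "primal_feasible C A m b X"
  shows "u2 C A m b S K \<alpha> t \<le> ereal (frob C X + t * \<alpha> * frob (mat 1) X)"
  unfolding u2_def
proof (rule SUP_least)
  fix y assume "y \<in> {y. psd (Lmap C A m y + (t * \<alpha>) *\<^sub>R mat 1) \<and> offblock_sq S (Lmap C A m y) \<le> K * \<alpha>}"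
  then have "0 \<le> frob (Lmap C A m y + (t * \<alpha>) *\<^sub>R mat 1) X"
    using assms frob_psd_nonneg unfolding primal_feasible_def by blast
  then show "ereal (\<Sum>i<m. b i * y i) \<le> ereal (frob C X + t * \<alpha> * frob (mat 1) X)"
    using dual_objective_eq[OF assms] by (simp add: frob_add_left frob_scaleR_left)
qed

lemma mono_bounded_tendsto_at_right:
  fixes f :: "real \<Rightarrow> ereal"
  assumes mono: "\<And>s t. a < s \<Longrightarrow> s \<le> t \<Longrightarrow> f s \<le> f t"
    and lower: "\<And>t. a < t \<Longrightarrow> ereal c \<le> f t"
    and upper: "a < t\<^sub>0" "f t\<^sub>0 < \<infinity>"
  shows "\<exists>l. (f \<longlongrightarrow> ereal l) (at_right a)"
proof -
  let ?l = "Inf (f ` {a<..})"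
  have "(f \<longlongrightarrow> ?l) (at_right a)"
    using Lim_right_bound[of UNIV a f "ereal c"] mono lower by simp
  moreover have "ereal c \<le> ?l" using lower by (auto intro: Inf_greatest)
  moreover have "?l \<le> f t\<^sub>0" using upper(1) by (auto intro: Inf_lower)
  ultimately show ?thesis using upper(2) by (cases ?l) auto
qed

theorem lemma5:
  fixes C :: "real^('n::{finite,linorder})^('n::{finite,linorder})" and A :: "nat \<Rightarrow> real^('n::{finite,linorder})^('n::{finite,linorder})"
    and m :: nat and b :: "nat \<Rightarrow> real" and r :: nat and M :: real
  defines "R \<equiv> (first_idx r :: ('n::{finite,linorder}) set)"
  defines "L \<equiv> Lmap C A m"
  defines "K \<equiv> M * (real_of_ereal (vP C A m b) - real_of_ereal (vD C A m b) + 2)"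
  assumes symC: "symm C" and symA: "\<forall>i<m. symm (A i)"
    and Pfeas: "\<exists>X. primal_feasible C A m b X"
    and Dfeas: "\<exists>y. dual_feasible C A m y"
    and vP_fin: "\<bar>vP C A m b\<bar> \<noteq> \<infinity>" and vD_fin: "\<bar>vD C A m b\<bar> \<noteq> \<infinity>"
    and sd1: "sing_deg_one C A m"
    and r_lt: "r < CARD('n::{finite,linorder})"
    and cond_a: "\<forall>y. psd (L y) \<longleftrightarrow>
        ((\<forall>i\<in>R. \<forall>j\<in>-R. L y $ i $ j = 0) \<and> (\<forall>i\<in>-R. \<forall>j\<in>-R. L y $ i $ j = 0)
         \<and> psd_block R (L y))"
    and cond_b: "\<exists>y. (\<forall>i\<in>R. \<forall>j\<in>-R. L y $ i $ j = 0) \<and> (\<forall>i\<in>-R. \<forall>j\<in>-R. L y $ i $ j = 0)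
         \<and> pd_block R (L y)"
    and cond_c: "\<exists>X. (\<forall>i j. (i \<in> R \<or> j \<in> R) \<longrightarrow> X $ i $ j = 0) \<and> pd_block (-R) X
         \<and> frob C X = 0 \<and> (\<forall>i<m. frob (A i) X = 0)"
    and M_pos: "M > 0"
    and M_bound: "\<forall>t y. t \<ge> 0 \<longrightarrow> psd_block (-R) (L y + t *\<^sub>R mat 1) \<longrightarrow>
        psd_block (-R) ((t * M) *\<^sub>R mat 1 - (L y + t *\<^sub>R mat 1))"
  shows "\<forall>\<alpha>>0. \<exists>l::real. ((\<lambda>t. u2 C A m b R K \<alpha> t) \<longlongrightarrow> ereal l) (at_right 0)"
proof (intro allI impI)
  fix \<alpha> :: real
  assume "\<alpha> > 0"
  obtain X\<^sub>0 where X\<^sub>0: "primal_feasible C A m b X\<^sub>0" using Pfeas by blast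
  obtain y\<^sub>0 where y\<^sub>0: "dual_feasible C A m y\<^sub>0" using Dfeas by blast
  have "\<forall>i\<in>R. \<forall>j\<in>-R. L y\<^sub>0 $ i $ j = 0"
    using cond_a y\<^sub>0 unfolding dual_feasible_def L_def by blast
  then have "offblock_sq R (Lmap C A m y\<^sub>0) = 0"
    unfolding offblock_sq_def L_def by simp
  moreover have "0 \<le> K"
    using vD_le_vP[of C A m b] vP_fin vD_fin M_pos unfolding K_def
    by (cases "vP C A m b"; cases "vD C A m b") auto
  ultimately have "ereal (\<Sum>i<m. b i * y\<^sub>0 i) \<le> u2 C A m b R K \<alpha> t" if "0 < t" for t
    using u2_lower_bound[OF y\<^sub>0] \<open>\<alpha> > 0\<close> that by simp
  moreover have "u2 C A m b R K \<alpha> 1 < \<infinity>"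
    using u2_upper_bound[OF X\<^sub>0, of R K \<alpha> 1] by (auto simp: le_less_trans)
  ultimately show "\<exists>l. ((\<lambda>t. u2 C A m b R K \<alpha> t) \<longlongrightarrow> ereal l) (at_right 0)"
    using u2_mono[of \<alpha>] \<open>\<alpha> > 0\<close>
    by (intro mono_bounded_tendsto_at_right[where t\<^sub>0 = 1]) auto
qed

end
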